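(* For every $m\in\mathbb{N}$, \[ \left(\frac{\pi}{3}\right)^{m}=1+m!\sum_{k=1}^{\infty}(-1)^k\frac{Q(m,2k;2)}{(m+2k)!}. \]
   Context: $s(n,k)$ denotes the signed Stirling numbers of the first kind, defined by $\frac{[\ln(1+x)]^k}{k!}=\sum_{n=k}^\infty s(n,k)\frac{x^n}{n!}$ for $|x|<1$; equivalently $\prod_{j=0}^{n-1}(z-j)=\sum_{k=0}^n s(n,k)z^k$. For $m\in\mathbb{N}$, $k\in\mathbb{N}_0$ and $\alpha\in\mathbb{R}$ define \[ Q(m,k;\alpha)=\sum_{\ell=0}^{k}\binom{m+\ell-1}{m-1}\, s(m+k-1,m+\ell-1)\left(\frac{m+k-\alpha}{2}\right)^{\ell}, \] with the convention $0^0=1$. *)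

theory Defs
  imports "HOL-Analysis.Analysis" "HOL-Combinatorics.Stirling"
begin

definition stirling1s :: "nat \<Rightarrow> nat \<Rightarrow> int" where
  "stirling1s n k = (-1) ^ (n - k) * int (stirling n k)"

text \<open>Q(m,k;alpha) for m >= 1.\<close>
definition Q :: "nat \<Rightarrow> nat \<Rightarrow> real \<Rightarrow> real" where
  "Q m k \<alpha> = (\<Sum>l = 0..k. real ((m + l - 1) choose (m - 1))
       * real_of_int (stirling1s (m + k - 1) (m + l - 1))
       * ((real (m + k) - \<alpha>) / 2) ^ l)"

end

theory Submission
  imports Defs
begin

(* Let t(n,k) be the central factorial numbers,
     x (x + n/2 - 1) (x + n/2 - 2) ... (x - n/2 + 1) = sum_k t(n,k) x^k.
   Expanding this shifted falling factorial with Stirling numbers gives Q(m,2j;2) = t(m+2j,m).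
   The unsigned numbers |t(n,k)| satisfy |t(n+2,k)| = (n^2/4) |t(n,k)| + |t(n,k-2)|, i.e. their
   exponential generating functions E_k solve (4 - x^2) E_k'' - x E_k' = 4 E_(k-2). By induction on k
   this gives sqrt (4 - x^2) E_k' = 2 E_(k-1) (both sides have the same derivative and agree at 0),
   and then E_k x = (2 arcsin (x/2))^k / k! for |x| < 2. Finally t(k+2j,k) has sign (-1)^j, all other
   t(n,k) vanish, and 2 arcsin (1/2) = pi/3. *)

section \<open>Central factorial polynomials\<close>

lemma sum_atMost_triangle_swap:
  fixes n :: nat
  shows "(\<Sum>j\<le>n. \<Sum>i\<le>j. g i j) = (\<Sum>i\<le>n. \<Sum>j=i..n. g i j :: 'a::comm_monoid_add)"
  by (induction n) (simp_all add: sum.distrib atLeastAtMostSuc_conv add_ac)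

lemma signed_stirling_sum_eq_prod:
  "(\<Sum>k\<le>n. of_int (stirling1s n k) * z ^ k) = (\<Prod>j<n. z - of_nat j :: 'a::comm_ring_1)"
proof -
  have "(\<Prod>j<n. z - of_nat j) = (-1) ^ n * pochhammer (-z) n"
    by (induction n) (simp_all add: pochhammer_Suc algebra_simps)
  also have "\<dots> = (-1) ^ n * (\<Sum>k\<le>n. of_nat (stirling n k) * (-z) ^ k)"
    by (simp add: stirling_pochhammer)
  also have "\<dots> = (\<Sum>k\<le>n. of_int (stirling1s n k) * z ^ k)"
    unfolding sum_distrib_left
  proof (rule sum.cong[OF refl])
    fix k assume "k \<in> {..n}"
    then have "(-1::'a) ^ n = (-1) ^ (n - k) * (-1) ^ k"
      by (simp flip: power_add)
    then show "(-1) ^ n * (of_nat (stirling n k) * (-z) ^ k) = of_int (stirling1s n k) * z ^ k"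
      by (simp add: stirling1s_def power_minus[of z] algebra_simps)
  qed
  finally show ?thesis ..
qed

(* central_coeff n i = t(n+1, i+1), by central_coeff_poly below. *)
definition central_coeff :: "nat \<Rightarrow> nat \<Rightarrow> real" where
  "central_coeff n i =
     (\<Sum>j=i..n. of_int (stirling1s n j) * of_nat (j choose i) * ((real n - 1) / 2) ^ (j - i))"

lemma central_coeff_poly:
  "(\<Sum>i\<le>n. central_coeff n i * w ^ i) = (\<Prod>j<n. w + (real n - 1) / 2 - real j)"
proof -
  define t where "t = (real n - 1) / 2"
  have "(\<Prod>j<n. w + t - real j) = (\<Sum>k\<le>n. of_int (stirling1s n k) * (w + t) ^ k)"
    by (simp add: signed_stirling_sum_eq_prod)
  also have "\<dots> = (\<Sum>k\<le>n. \<Sum>i\<le>k. of_int (stirling1s n k) * (of_nat (k choose i) * w ^ i * t ^ (k - i)))"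
    by (simp add: binomial_ring sum_distrib_left)
  also have "\<dots> = (\<Sum>i\<le>n. \<Sum>k=i..n. of_int (stirling1s n k) * (of_nat (k choose i) * w ^ i * t ^ (k - i)))"
    by (rule sum_atMost_triangle_swap)
  also have "\<dots> = (\<Sum>i\<le>n. central_coeff n i * w ^ i)"
    by (simp add: central_coeff_def t_def sum_distrib_left mult_ac)
  finally show ?thesis by (simp add: t_def)
qed

lemma central_coeff_eq_0: "n < i \<Longrightarrow> central_coeff n i = 0"
  by (simp add: central_coeff_def)

lemma central_coeff_diag: "central_coeff n n = 1"
  by (simp add: central_coeff_def stirling1s_def)

lemma central_prod_Suc_Suc:
  "(\<Prod>j<n+2. w + (real (n+2) - 1) / 2 - real j)
     = (w\<^sup>2 - (real n + 1)\<^sup>2 / 4) * (\<Prod>j<n. w + (real n - 1) / 2 - real j)"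
proof -
  define f where "f j = w + (real (n+2) - 1) / 2 - real j" for j
  have "(\<Prod>j<n+2. f j) = (\<Prod>j<Suc n. f j) * f (Suc n)"
    by simp
  also have "(\<Prod>j<Suc n. f j) = f 0 * (\<Prod>j<n. f (Suc j))"
    by (rule prod.lessThan_Suc_shift)
  also have "(\<Prod>j<n. f (Suc j)) = (\<Prod>j<n. w + (real n - 1) / 2 - real j)"
    by (intro prod.cong) (simp_all add: f_def)
  also have "f 0 * (\<Prod>j<n. w + (real n - 1) / 2 - real j) * f (Suc n)
      = (f 0 * f (Suc n)) * (\<Prod>j<n. w + (real n - 1) / 2 - real j)"
    by (simp only: mult_ac)
  also have "f 0 * f (Suc n) = w\<^sup>2 - (real n + 1)\<^sup>2 / 4"
    by (simp add: f_def power2_eq_square algebra_simps)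
  finally show ?thesis by (simp add: f_def)
qed

lemma central_coeff_Suc_Suc:
  "central_coeff (n+2) i
     = (if 2 \<le> i then central_coeff n (i-2) else 0) - (real n + 1)\<^sup>2 / 4 * central_coeff n i"
proof -
  define d where
    "d i = (if 2 \<le> i then central_coeff n (i-2) else 0) - (real n + 1)\<^sup>2 / 4 * central_coeff n i"
    for i
  have "(\<Sum>i\<le>n+2. central_coeff (n+2) i * w ^ i) = (\<Sum>i\<le>n+2. d i * w ^ i)" for w
  proof -
    let ?p = "\<Sum>i\<le>n. central_coeff n i * w ^ i"
    have shift: "(\<Sum>i\<le>n+2. (if 2 \<le> i then central_coeff n (i-2) else 0) * w ^ i) = w\<^sup>2 * ?p"
      by (simp add: sum.atMost_Suc_shift sum_distrib_left power2_eq_square mult_ac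
               del: sum.atMost_Suc)
    have vanish: "(\<Sum>i\<le>n+2. central_coeff n i * w ^ i) = ?p"
      by (simp add: central_coeff_eq_0)
    have "(\<Sum>i\<le>n+2. d i * w ^ i)
        = (\<Sum>i\<le>n+2. (if 2 \<le> i then central_coeff n (i-2) else 0) * w ^ i)
          - (real n + 1)\<^sup>2 / 4 * (\<Sum>i\<le>n+2. central_coeff n i * w ^ i)"
      by (simp only: d_def left_diff_distrib sum_subtractf sum_distrib_left mult.assoc)
    also have "\<dots> = w\<^sup>2 * ?p - (real n + 1)\<^sup>2 / 4 * ?p"
      by (simp only: shift vanish)
    also have "\<dots> = (\<Sum>i\<le>n+2. central_coeff (n+2) i * w ^ i)"
      by (simp only: central_coeff_poly central_prod_Suc_Suc left_diff_distrib)
    finally show ?thesis ..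
  qed
  then have "\<forall>i\<le>n+2. central_coeff (n+2) i = d i"
    using polyfun_eq_coeffs[where n="n+2" and c="central_coeff (n+2)" and d=d] by blast
  then show ?thesis
    by (cases "i \<le> n+2") (auto simp: d_def central_coeff_eq_0)
qed

lemma Q_eq_central_coeff:
  assumes "1 \<le> m"
  shows "Q m k 2 = central_coeff (m+k-1) (m-1)"
proof -
  have "central_coeff (m+k-1) (m-1) = (\<Sum>j=0+(m-1)..k+(m-1).
      of_int (stirling1s (m+k-1) j) * of_nat (j choose (m-1)) * ((real (m+k-1) - 1) / 2) ^ (j - (m-1)))"
    unfolding central_coeff_def using assms by (intro sum.cong) auto
  also have "\<dots> = (\<Sum>l=0..k. of_int (stirling1s (m+k-1) (l+(m-1))) * of_nat ((l+(m-1)) choose (m-1))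
      * ((real (m+k-1) - 1) / 2) ^ l)"
    by (subst sum.shift_bounds_cl_nat_ivl) simp
  also have "\<dots> = Q m k 2"
    unfolding Q_def using assms by (intro sum.cong refl) (simp add: of_nat_diff algebra_simps)
  finally show ?thesis ..
qed

section \<open>Central factorial numbers\<close>

(* central_factorial n k = |t(n,k)|. *)
fun central_factorial :: "nat \<Rightarrow> nat \<Rightarrow> real" where
  "central_factorial 0 k = (if k = 0 then 1 else 0)"
| "central_factorial (Suc 0) k = (if k = 1 then 1 else 0)"
| "central_factorial (Suc (Suc n)) k =
     (real n)\<^sup>2 / 4 * central_factorial n k + (if 2 \<le> k then central_factorial n (k-2) else 0)"

lemma central_factorial_eq_0: "n < k \<or> odd (n - k) \<Longrightarrow> central_factorial n k = 0"
proof (induction n k rule: central_factorial.induct)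
  case (3 n k)
  then show ?case
    by (cases "2 \<le> k") (auto simp: Suc_diff_le)
qed auto

lemma central_factorial_right_0: "0 < n \<Longrightarrow> central_factorial n 0 = 0"
  by (induction n rule: nat_induct2) auto

lemma central_factorial_diag: "central_factorial n n = 1"
  by (induction n rule: nat_induct2) (simp_all add: central_factorial_eq_0)

lemma central_factorial_eq_central_coeff:
  "1 \<le> k \<Longrightarrow> k \<le> n \<Longrightarrow> even (n - k) \<Longrightarrow>
     central_factorial n k = (-1) ^ ((n - k) div 2) * central_coeff (n - 1) (k - 1)"
proof (induction n k rule: central_factorial.induct)
  case (2 k)
  then show ?case by (simp add: central_coeff_diag del: One_nat_def)
next
  case (3 n k)
  show ?case
  proof (cases "k = n + 2")
    case True
    then show ?thesis by (simp add: central_factorial_diag central_coeff_diag)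
  next
    case False
    moreover have "k \<noteq> Suc n" using "3.prems"(3) by auto
    ultimately have "k \<le> n" using "3.prems"(2) by linarith
    then have "even (n - k)" using "3.prems"(3) by (simp add: Suc_diff_le)
    define e where "e = (n - k) div 2"
    have sign: "(Suc (Suc n) - k) div 2 = Suc e"
      using \<open>k \<le> n\<close> \<open>even (n - k)\<close> by (auto simp: e_def Suc_diff_le elim!: evenE)
    have low: "(if 2 \<le> k then central_factorial n (k-2) else 0)
        = (-1) ^ Suc e * (if 3 \<le> k then central_coeff (n-1) (k-3) else 0)"
    proof (cases "3 \<le> k")
      case True
      then have "central_factorial n (k-2) = (-1) ^ Suc e * central_coeff (n-1) (k-3)"
        using "3.IH"(2) \<open>k \<le> n\<close> \<open>even (n - k)\<close> sign
        by (auto simp: e_def numeral_3_eq_3 Suc_diff_le)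
      then show ?thesis using True by simp
    qed (use \<open>k \<le> n\<close> "3.prems"(1) in \<open>auto simp: central_factorial_right_0 le_Suc_eq\<close>)
    have "central_factorial (Suc (Suc n)) k
        = (real n)\<^sup>2 / 4 * central_factorial n k + (if 2 \<le> k then central_factorial n (k-2) else 0)"
      by (rule central_factorial.simps(3))
    also have "\<dots> = (-1) ^ Suc e
        * ((if 3 \<le> k then central_coeff (n-1) (k-3) else 0) - (real n)\<^sup>2 / 4 * central_coeff (n-1) (k-1))"
      unfolding low using "3.IH"(1) "3.prems"(1) \<open>k \<le> n\<close> \<open>even (n - k)\<close>
      by (simp add: e_def algebra_simps)
    also have "\<dots> = (-1) ^ Suc e * central_coeff (n+1) (k-1)"
      using central_coeff_Suc_Suc[of "n-1" "k-1"] \<open>k \<le> n\<close> "3.prems"(1)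
      by (simp add: of_nat_diff numeral_3_eq_3 le_diff_conv2 Suc_diff_le)
    finally show ?thesis by (simp add: sign)
  qed
qed simp

lemma central_factorial_nonneg: "0 \<le> central_factorial n k"
  by (induction n k rule: central_factorial.induct) auto

lemma central_factorial_le: "central_factorial n k \<le> fact (Suc n) / 2 ^ n"
proof (induction n k rule: central_factorial.induct)
  case (3 n k)
  define B :: real where "B = fact (Suc n) / 2 ^ n"
  have le_B: "central_factorial n k \<le> B" "(if 2 \<le> k then central_factorial n (k-2) else 0) \<le> B"
    using "3.IH" by (auto simp: B_def)
  have "central_factorial (Suc (Suc n)) k \<le> (real n)\<^sup>2 / 4 * B + B"
    unfolding central_factorial.simps(3) by (intro add_mono mult_left_mono le_B) simp
  also have "\<dots> = ((real n)\<^sup>2 / 4 + 1) * B"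
    by (simp add: algebra_simps)
  also have "\<dots> \<le> (real n + 2) * (real n + 3) / 4 * B"
    by (intro mult_right_mono) (auto simp: B_def power2_eq_square field_simps)
  also have "\<dots> = fact (Suc (Suc (Suc n))) / 2 ^ Suc (Suc n)"
    by (simp add: B_def field_simps)
  finally show ?case .
qed auto

section \<open>Exponential generating functions\<close>

definition egf :: "(nat \<Rightarrow> real) \<Rightarrow> real \<Rightarrow> real" where
  "egf a x = (\<Sum>n. a n / fact n * x ^ n)"

lemma egf_at_0: "egf a 0 = a 0"
  by (simp only: egf_def powser_zero) simp

lemma egf_zero: "egf (\<lambda>_. 0) x = 0"
  by (simp add: egf_def)

lemma Suc_times_divide_fact_Suc: "real (Suc n) * c / fact (Suc n) = c / fact n"
  by (simp add: divide_simps del: of_nat_Suc)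

lemma diffs_egf_coeffs: "diffs (\<lambda>n. a n / fact n) = (\<lambda>n. a (Suc n) / fact n :: real)"
  by (rule ext) (simp add: diffs_def Suc_times_divide_fact_Suc del: of_nat_Suc)

lemma egf_shift_summable:
  fixes a :: "nat \<Rightarrow> real"
  assumes "\<And>z. norm z < R \<Longrightarrow> summable (\<lambda>n. a n / fact n * z ^ n)" and "norm x < R"
  shows "summable (\<lambda>n. a (Suc n) / fact n * x ^ n)"
  using termdiff_converges[where c = "\<lambda>n. a n / fact n", OF assms(2,1)]
  by (simp add: diffs_egf_coeffs)

lemma egf_has_field_derivative:
  fixes a :: "nat \<Rightarrow> real"
  assumes "\<And>z. norm z < R \<Longrightarrow> summable (\<lambda>n. a n / fact n * z ^ n)" and "norm x < R"
  shows "(egf a has_field_derivative egf (\<lambda>n. a (Suc n)) x) (at x)"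
  using termdiffs_strong'[where c = "\<lambda>n. a n / fact n", OF assms]
  unfolding egf_def[abs_def] diffs_egf_coeffs .

lemma sums_egf_times_x:
  assumes "(\<lambda>n. a (Suc n) / fact n * x ^ n) sums s"
  shows "(\<lambda>n. real n * a n / fact n * x ^ n) sums (x * s)"
proof -
  have "(\<lambda>n. x * (a (Suc n) / fact n * x ^ n)) sums (x * s)"
    using sums_mult[OF assms] .
  moreover have "x * (a (Suc n) / fact n * x ^ n) = real (Suc n) * a (Suc n) / fact (Suc n) * x ^ Suc n"
    for n by (simp add: Suc_times_divide_fact_Suc del: of_nat_Suc)
  ultimately have "(\<lambda>n. real (Suc n) * a (Suc n) / fact (Suc n) * x ^ Suc n) sums (x * s)"
    by (simp only:)
  then show ?thesis
    using sums_Suc_iff[of "\<lambda>n. real n * a n / fact n * x ^ n"] by simp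
qed

lemma egf_second_order:
  assumes summable: "\<And>z. norm z < R \<Longrightarrow> summable (\<lambda>n. a n / fact n * z ^ n)"
    and rec: "\<And>n. a (Suc (Suc n)) = (real n)\<^sup>2 / 4 * a n + b n"
    and x: "norm x < R"
  shows "(4 - x\<^sup>2) * egf (\<lambda>n. a (Suc (Suc n))) x - x * egf (\<lambda>n. a (Suc n)) x = 4 * egf b x"
proof -
  define A1 where "A1 = egf (\<lambda>n. a (Suc n)) x"
  define A2 where "A2 = egf (\<lambda>n. a (Suc (Suc n))) x"
  have summable1: "\<And>z. norm z < R \<Longrightarrow> summable (\<lambda>n. a (Suc n) / fact n * z ^ n)"
    by (rule egf_shift_summable[OF summable])
  have s1: "(\<lambda>n. a (Suc n) / fact n * x ^ n) sums A1"
    unfolding A1_def egf_def using summable1[OF x] by (rule summable_sums)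
  have s2: "(\<lambda>n. a (Suc (Suc n)) / fact n * x ^ n) sums A2"
    unfolding A2_def egf_def using egf_shift_summable[OF summable1 x] by (rule summable_sums)
  \<comment> \<open>x times the first and x^2 times the second derivative of egf a have coefficients n a_n and n (n - 1) a_n.\<close>
  have t1: "(\<lambda>n. real n * a n / fact n * x ^ n) sums (x * A1)"
    by (rule sums_egf_times_x[OF s1])
  have "(\<lambda>n. real n * a (Suc n) / fact n * x ^ n) sums (x * A2)"
    by (rule sums_egf_times_x[OF s2])
  then have t2: "(\<lambda>n. real n * ((real n - 1) * a n) / fact n * x ^ n) sums (x * (x * A2))"
    by (intro sums_egf_times_x) simp
  have "(\<lambda>n. a (Suc (Suc n)) / fact n * x ^ n
          - (real n * a n / fact n * x ^ n + real n * ((real n - 1) * a n) / fact n * x ^ n) / 4)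
        sums (A2 - (x * A1 + x * (x * A2)) / 4)"
    by (intro sums_diff sums_divide sums_add s2 t1 t2)
  moreover have "a (Suc (Suc n)) / fact n * x ^ n
          - (real n * a n / fact n * x ^ n + real n * ((real n - 1) * a n) / fact n * x ^ n) / 4
        = b n / fact n * x ^ n" for n
    by (simp add: rec power2_eq_square field_simps)
  ultimately have "egf b x = A2 - (x * A1 + x * (x * A2)) / 4"
    by (simp add: egf_def sums_iff)
  then have "4 * egf b x = 4 * A2 - x * A1 - x * (x * A2)"
    by (simp add: field_simps)
  then show ?thesis
    unfolding A1_def[symmetric] A2_def[symmetric] by (simp add: power2_eq_square algebra_simps)
qed

lemma summable_Suc_times_geometric:
  "norm (r :: real) < 1 \<Longrightarrow> summable (\<lambda>n. real (Suc n) * r ^ n)"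
proof -
  assume "norm r < 1"
  then have "summable (\<lambda>n. diffs (\<lambda>_. 1) n * r ^ n)"
    by (rule termdiff_converges) (simp add: summable_geometric)
  then show ?thesis by (simp add: diffs_def)
qed

lemma eq_on_interval_if_same_derivative:
  assumes "\<And>y. \<bar>y\<bar> < r \<Longrightarrow> (f has_real_derivative d y) (at y)"
    and "\<And>y. \<bar>y\<bar> < r \<Longrightarrow> (g has_real_derivative d y) (at y)"
    and "f 0 = g 0" and "\<bar>x\<bar> < r"
  shows "f x = g x"
proof -
  have "\<exists>c. \<forall>y\<in>ball 0 r. f y - g y = c"
  proof (rule has_field_derivative_zero_constant)
    fix y :: real assume "y \<in> ball 0 r"
    then have "((\<lambda>y. f y - g y) has_real_derivative d y - d y) (at y)"
      using assms(1,2) by (intro DERIV_diff) auto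
    then show "((\<lambda>y. f y - g y) has_field_derivative 0) (at y within ball 0 r)"
      by (simp add: has_field_derivative_at_within)
  qed simp
  then obtain c where "\<And>y. \<bar>y\<bar> < r \<Longrightarrow> f y - g y = c" by auto
  from this[of x] this[of 0] assms(3,4) show ?thesis by simp
qed

section \<open>The generating function of the central factorial numbers\<close>

lemma central_factorial_egf_summable:
  assumes "norm (x :: real) < 2"
  shows "summable (\<lambda>n. central_factorial n k / fact n * x ^ n)"
proof (rule summable_comparison_test')
  show "summable (\<lambda>n. real (Suc n) * (norm x / 2) ^ n)"
    using assms by (intro summable_Suc_times_geometric) simp
  fix n
  have "norm (central_factorial n k / fact n * x ^ n) = central_factorial n k / fact n * norm x ^ n"
    using central_factorial_nonneg[of n k] by (simp add: abs_mult power_abs)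
  also have "\<dots> \<le> fact (Suc n) / 2 ^ n / fact n * norm x ^ n"
    using central_factorial_le[of n k] by (intro mult_right_mono divide_right_mono) auto
  also have "\<dots> = real (Suc n) * (norm x / 2) ^ n"
    by (simp add: power_divide del: of_nat_Suc)
  finally show "norm (central_factorial n k / fact n * x ^ n) \<le> real (Suc n) * (norm x / 2) ^ n" .
qed

lemma central_factorial_egf_shift_summable:
  "norm (z :: real) < 2 \<Longrightarrow> summable (\<lambda>n. central_factorial (Suc n) k / fact n * z ^ n)"
  by (rule egf_shift_summable[OF central_factorial_egf_summable])

lemma central_factorial_egf_second_order:
  assumes "\<bar>x\<bar> < 2"
  shows "(4 - x\<^sup>2) * egf (\<lambda>n. central_factorial (Suc (Suc n)) k) x
           - x * egf (\<lambda>n. central_factorial (Suc n) k) x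
         = (if k < 2 then 0 else 4 * egf (\<lambda>n. central_factorial n (k - 2)) x)"
proof -
  define b where "b n = (if k < 2 then 0 else central_factorial n (k - 2))" for n
  have "(4 - x\<^sup>2) * egf (\<lambda>n. central_factorial (Suc (Suc n)) k) x
          - x * egf (\<lambda>n. central_factorial (Suc n) k) x = 4 * egf b x"
    by (rule egf_second_order[where R = 2, OF central_factorial_egf_summable])
       (use assms in \<open>auto simp: b_def\<close>)
  moreover have "egf b x = (if k < 2 then 0 else egf (\<lambda>n. central_factorial n (k - 2)) x)"
    by (simp add: b_def[abs_def] egf_zero)
  ultimately show ?thesis by simp
qed

lemma square_less_4: "\<bar>y :: real\<bar> < 2 \<Longrightarrow> y\<^sup>2 < 4"
  using power_strict_mono[of "\<bar>y\<bar>" 2 2] by simp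

lemma sqrt_4_minus_square_has_derivative:
  assumes "\<bar>y\<bar> < 2"
  shows "((\<lambda>y. sqrt (4 - y\<^sup>2)) has_real_derivative - y / sqrt (4 - y\<^sup>2)) (at y)"
proof -
  have "((\<lambda>y. sqrt (4 - y\<^sup>2)) has_real_derivative inverse (sqrt (4 - y\<^sup>2)) / 2 * (- (2 * y))) (at y)"
    using square_less_4[OF assms] by (intro DERIV_chain2[OF DERIV_real_sqrt]) (auto intro!: derivative_eq_intros)
  then show ?thesis by (simp add: field_simps)
qed

lemma central_factorial_egf_first_order:
  assumes "\<bar>x\<bar> < 2"
  shows "sqrt (4 - x\<^sup>2) * egf (\<lambda>n. central_factorial (Suc n) k) x
           = (if k = 0 then 0 else 2 * egf (\<lambda>n. central_factorial n (k - 1)) x)"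
  using assms
proof (induction k arbitrary: x)
  case 0
  then show ?case by (simp add: central_factorial_right_0 egf_zero)
next
  case (Suc k)
  let ?E1 = "egf (\<lambda>n. central_factorial (Suc n) (Suc k))"
  let ?E2 = "egf (\<lambda>n. central_factorial (Suc (Suc n)) (Suc k))"
  let ?d = "\<lambda>y. 2 * egf (\<lambda>n. central_factorial (Suc n) k) y"
  have "sqrt (4 - x\<^sup>2) * ?E1 x = 2 * egf (\<lambda>n. central_factorial n k) x"
  proof (rule eq_on_interval_if_same_derivative[where r = 2 and d = ?d
        and f = "\<lambda>x. sqrt (4 - x\<^sup>2) * ?E1 x" and g = "\<lambda>x. 2 * egf (\<lambda>n. central_factorial n k) x"])
    fix y :: real assume y: "\<bar>y\<bar> < 2"
    define r where "r = sqrt (4 - y\<^sup>2)"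
    have r: "r > 0" "r * r = 4 - y\<^sup>2"
      using square_less_4[OF y] by (simp_all add: r_def)
    have "(?E1 has_real_derivative ?E2 y) (at y)"
      by (rule egf_has_field_derivative[where R = 2])
         (use y central_factorial_egf_shift_summable in auto)
    then have "((\<lambda>y. sqrt (4 - y\<^sup>2) * ?E1 y) has_real_derivative
        - y / r * ?E1 y + ?E2 y * r) (at y)"
      unfolding r_def by (rule DERIV_mult[OF sqrt_4_minus_square_has_derivative[OF y]])
    moreover have "r * (- y / r * ?E1 y + ?E2 y * r) = (r * r) * ?E2 y - y * ?E1 y"
      using r by (simp add: field_simps del: central_factorial.simps)
    moreover have "\<dots> = r * ?d y"
    proof -
      have "(r * r) * ?E2 y - y * ?E1 y
          = (if k = 0 then 0 else 4 * egf (\<lambda>n. central_factorial n (k - 1)) y)"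
        using central_factorial_egf_second_order[OF y, of "Suc k"]
        by (simp add: r(2) numeral_2_eq_2 del: central_factorial.simps)
      also have "\<dots> = 2 * (r * egf (\<lambda>n. central_factorial (Suc n) k) y)"
        using Suc.IH[OF y] by (simp add: r_def)
      finally show ?thesis by simp
    qed
    ultimately show "((\<lambda>y. sqrt (4 - y\<^sup>2) * ?E1 y) has_real_derivative ?d y) (at y)"
      using r by simp
  next
    fix y :: real assume "\<bar>y\<bar> < 2"
    then show "((\<lambda>y. 2 * egf (\<lambda>n. central_factorial n k) y) has_real_derivative ?d y) (at y)"
      by (intro DERIV_cmult egf_has_field_derivative[where R = 2] central_factorial_egf_summable) auto
  qed (simp_all add: egf_at_0 Suc.prems)
  then show ?case by simp
qed

lemma arcsin_half_has_derivative:
  assumes "\<bar>y\<bar> < 2"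
  shows "((\<lambda>y. 2 * arcsin (y / 2)) has_real_derivative 2 / sqrt (4 - y\<^sup>2)) (at y)"
proof -
  have "sqrt (1 - (y / 2)\<^sup>2) = sqrt ((4 - y\<^sup>2) / 4)"
    by (simp add: field_simps)
  also have "\<dots> = sqrt (4 - y\<^sup>2) / 2"
    by (simp add: real_sqrt_divide)
  finally have half: "sqrt (1 - (y / 2)\<^sup>2) = sqrt (4 - y\<^sup>2) / 2" .
  have "((\<lambda>y. 2 * arcsin (y / 2)) has_real_derivative 2 * (inverse (sqrt (1 - (y / 2)\<^sup>2)) * (1 / 2))) (at y)"
    using assms by (intro DERIV_cmult DERIV_chain2[OF DERIV_arcsin]) (auto intro!: derivative_eq_intros)
  then show ?thesis
    by (simp add: half)
qed

lemma arcsin_power_has_derivative: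
  assumes "\<bar>y\<bar> < 2"
  shows "((\<lambda>y. (2 * arcsin (y / 2)) ^ Suc k / fact (Suc k)) has_real_derivative
           2 * ((2 * arcsin (y / 2)) ^ k / fact k) / sqrt (4 - y\<^sup>2)) (at y)"
proof -
  let ?u = "2 * arcsin (y / 2)"
  have "((\<lambda>y. (2 * arcsin (y / 2)) ^ Suc k / fact (Suc k)) has_real_derivative
      (1 + real k) * (2 / sqrt (4 - y\<^sup>2) * ?u ^ k) / fact (Suc k)) (at y)"
    by (intro DERIV_cdivide DERIV_power_Suc arcsin_half_has_derivative assms)
  moreover have "(1 + real k) * (2 / sqrt (4 - y\<^sup>2) * ?u ^ k) / fact (Suc k)
      = 2 * (?u ^ k / fact k) / sqrt (4 - y\<^sup>2)"
    by (simp add: divide_simps del: of_nat_Suc)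
  ultimately show ?thesis by (simp only:)
qed

lemma central_factorial_egf_eq_arcsin_power:
  assumes "\<bar>x\<bar> < 2"
  shows "egf (\<lambda>n. central_factorial n k) x = (2 * arcsin (x / 2)) ^ k / fact k"
  using assms
proof (induction k arbitrary: x)
  case 0
  have "(\<lambda>n. central_factorial n 0 / fact n * x ^ n) = (\<lambda>n. if n = 0 then 1 else 0)"
    by (auto simp: central_factorial_right_0)
  then show ?case
    using sums_single[of 0 "\<lambda>_. 1 :: real"] by (simp add: egf_def sums_iff)
next
  case (Suc k)
  let ?d = "\<lambda>y. 2 * ((2 * arcsin (y / 2)) ^ k / fact k) / sqrt (4 - y\<^sup>2)"
  show ?case
  proof (rule eq_on_interval_if_same_derivative[where r = 2 and d = ?d
        and f = "egf (\<lambda>n. central_factorial n (Suc k))"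
        and g = "\<lambda>y. (2 * arcsin (y / 2)) ^ Suc k / fact (Suc k)"])
    fix y :: real assume y: "\<bar>y\<bar> < 2"
    have "(egf (\<lambda>n. central_factorial n (Suc k)) has_real_derivative
        egf (\<lambda>n. central_factorial (Suc n) (Suc k)) y) (at y)"
      by (rule egf_has_field_derivative[where R = 2])
         (use y central_factorial_egf_summable in auto)
    moreover have "egf (\<lambda>n. central_factorial (Suc n) (Suc k)) y = ?d y"
      using central_factorial_egf_first_order[OF y, of "Suc k"] Suc.IH[OF y] square_less_4[OF y]
      by (simp add: field_simps del: central_factorial.simps)
    ultimately show "(egf (\<lambda>n. central_factorial n (Suc k)) has_real_derivative ?d y) (at y)"
      by simp
  next
    fix y :: real assume "\<bar>y\<bar> < 2"
    then show "((\<lambda>y. (2 * arcsin (y / 2)) ^ Suc k / fact (Suc k)) has_real_derivative ?d y) (at y)"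
      by (rule arcsin_power_has_derivative)
  qed (simp_all add: egf_at_0 Suc.prems)
qed

lemma central_factorial_egf_diagonal_sums:
  assumes "\<bar>x\<bar> < 2"
  shows "(\<lambda>j. central_factorial (k + 2 * j) k / fact (k + 2 * j) * x ^ (k + 2 * j))
           sums ((2 * arcsin (x / 2)) ^ k / fact k)"
proof -
  have "(\<lambda>n. central_factorial n k / fact n * x ^ n) sums egf (\<lambda>n. central_factorial n k) x"
    unfolding egf_def using assms by (intro summable_sums central_factorial_egf_summable) simp
  then have "(\<lambda>n. central_factorial n k / fact n * x ^ n) sums ((2 * arcsin (x / 2)) ^ k / fact k)"
    by (simp only: central_factorial_egf_eq_arcsin_power[OF assms])
  moreover have "central_factorial n k / fact n * x ^ n = 0" if "n \<notin> range (\<lambda>j. k + 2 * j)" for n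
  proof -
    have "n < k \<or> odd (n - k)"
    proof (rule ccontr)
      assume "\<not> (n < k \<or> odd (n - k))"
      then have "k \<le> n" and "even (n - k)" by auto
      from \<open>even (n - k)\<close> obtain j where "n - k = 2 * j" by (rule evenE)
      with \<open>k \<le> n\<close> have "n = k + 2 * j" by simp
      with that show False by blast
    qed
    then show ?thesis by (simp add: central_factorial_eq_0)
  qed
  moreover have "strict_mono (\<lambda>j. k + 2 * j)"
    by (rule strict_monoI) simp
  ultimately show ?thesis
    by (subst sums_mono_reindex) simp_all
qed

theorem mainTheorem14:
  fixes m :: nat
  assumes "m \<ge> 1"
  shows "summable (\<lambda>k. (-1) ^ (k + 1) * Q m (2 * (k + 1)) 2 / fact (m + 2 * (k + 1)))
    \<and> (pi / 3) ^ m = 1 + fact m * (\<Sum>k. (-1) ^ (k + 1) * Q m (2 * (k + 1)) 2 / fact (m + 2 * (k + 1)))"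
proof -
  define t where "t j = (-1) ^ j * Q m (2 * j) 2 / fact (m + 2 * j)" for j
  have "t = (\<lambda>j. central_factorial (m + 2 * j) m / fact (m + 2 * j) * 1 ^ (m + 2 * j))"
    using central_factorial_eq_central_coeff[of m "m + 2 * _"] Q_eq_central_coeff[OF assms]
      assms by (auto simp: t_def)
  then have "t sums ((pi / 3) ^ m / fact m)"
    using central_factorial_egf_diagonal_sums[of 1 m] by simp
  moreover have "t 0 = 1 / fact m"
    using Q_eq_central_coeff[OF assms, of 0] assms by (simp add: t_def central_coeff_diag)
  ultimately have "(\<lambda>j. t (Suc j)) sums ((pi / 3) ^ m / fact m - 1 / fact m)"
    by (simp add: sums_Suc_iff)
  moreover have "(pi / 3) ^ m = 1 + fact m * ((pi / 3) ^ m / fact m - 1 / fact m)"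
    by (simp add: field_simps)
  ultimately show ?thesis
    by (simp add: t_def sums_iff)
qed

end
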